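(* Let $p,n$ be positive integers with $c=\gcd(p,n)$ prime, let $d=n/c$ and $y\in\mathbb{Z}_n$. Let $G\cong K_{c-1,d}$ and $H\cong K_{1,n}$ with disjoint vertex sets. Then $\mathcal{Q}_{(\mathbb{Z}_n,y,y)}(\widetilde{\mathcal{T}(p,2)})\cong G\,\overrightarrow{\triangledown_d}\,H$. Explicitly, the trivial coloring carries $n$ loops and has no outgoing arcs to other vertices, and for each nontrivial coloring $\alpha$ and each coloring $\beta$ (trivial or not) there are exactly $d$ arcs from $\alpha$ to $\beta$.
   Context: $\mathbb{Z}_n$ is the dihedral quandle ($x\triangleright y=2y-x$ mod $n$) and $(\mathbb{Z}_n,y,y)$ the $2$-pointed quandle with both basepoints $y$. $P(\widetilde{\mathcal{T}(p,2)})=(Q,x_1,x_{p+1})$ with $Q=\langle x_1,\dots,x_{p+1}\mid x_p=x_2\triangleright x_{p+1},\ x_i=x_{i+2}\triangleright x_{i+1}\ (1\le i\le p-1)\rangle$, the fundamental pointed quandle of the $1$-linkoid of $(p,2)$-torus type. For a pointed quandle $\mathcal{X}$, the full pointed quandle coloring quiver $\mathcal{Q}_{\mathcal{X}}(L)$ is the directed multigraph with vertex set $\hom(P(L),\mathcal{X})$ (basepoint-preserving homomorphisms) and $|\{\varphi\in\operatorname{End}(\mathcal{X}):\varphi\circ\alpha=\beta\}|$ arcs from $\alpha$ to $\beta$, with $\operatorname{End}(\mathcal{X})$ the pointed endomorphisms. A directed multigraph is a pair $(V,w)$, $w:V\times V\to\mathbb{Z}_{\ge0}$ counting arcs. $K_{m,k}$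 is the directed multigraph on $\{1,\dots,m\}$ with $w(u,v)=k$ for all $u,v$ (loops included). For directed multigraphs $G=(V(G),w_G)$, $H=(V(H),w_H)$ with disjoint vertex sets, the $k$-directed join $G\,\overrightarrow{\triangledown_k}\,H$ has vertex set $V(G)\cup V(H)$ and $w(u,v)=w_G(u,v)$ if $u,v\in V(G)$, $w_H(u,v)$ if $u,v\in V(H)$, $k$ if $u\in V(G),v\in V(H)$, and $0$ if $u\in V(H),v\in V(G)$. *)

theory Defs
  imports Main "HOL-Computational_Algebra.Primes"
begin

text \<open>Dihedral quandle Z_n, elements represented by the integers 0..n-1.\<close>
definition dih_op :: "int \<Rightarrow> int \<Rightarrow> int \<Rightarrow> int" where
  "dih_op n x y = (2 * y - x) mod n"

definition Zn :: "int \<Rightarrow> int set" where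
  "Zn n = {0..<n}"

text \<open>Basepoint-preserving homomorphisms from the fundamental pointed quandle
  P(T~(p,2)) = (Q, x_1, x_(p+1)) to (Z_n, y, y). By the universal property of the
  presentation of Q, these are exactly the assignments of the generators
  x_1,...,x_(p+1) to elements of Z_n satisfying the defining relations and sending
  x_1 and x_(p+1) to y.\<close>
definition torus_colorings :: "nat \<Rightarrow> int \<Rightarrow> int \<Rightarrow> (nat \<Rightarrow> int) set" where
  "torus_colorings p n y = {x.
     (\<forall>i\<in>{1..p+1}. x i \<in> Zn n) \<and> (\<forall>i. i \<notin> {1..p+1} \<longrightarrow> x i = 0) \<and>
     x p = dih_op n (x 2) (x (p+1)) \<and>
     (\<forall>i\<in>{1..p-1}. x i = dih_op n (x (i+2)) (x (i+1))) \<and>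
     x 1 = y \<and> x (p+1) = y}"

definition dih_pointed_End :: "int \<Rightarrow> int \<Rightarrow> (int \<Rightarrow> int) set" where
  "dih_pointed_End n y = {f.
     (\<forall>a\<in>Zn n. f a \<in> Zn n) \<and> (\<forall>a. a \<notin> Zn n \<longrightarrow> f a = 0) \<and>
     (\<forall>a\<in>Zn n. \<forall>b\<in>Zn n. f (dih_op n a b) = dih_op n (f a) (f b)) \<and>
     f y = y}"

definition torus_arcs :: "nat \<Rightarrow> int \<Rightarrow> int \<Rightarrow> (nat \<Rightarrow> int) \<Rightarrow> (nat \<Rightarrow> int) \<Rightarrow> nat" where
  "torus_arcs p n y \<alpha> \<beta> =
     card {f \<in> dih_pointed_End n y. \<forall>i\<in>{1..p+1}. f (\<alpha> i) = \<beta> i}"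

text \<open>Directed multigraphs as pairs (V, w); only the values of w on V x V matter.\<close>
type_synonym 'v dmg = "'v set \<times> ('v \<Rightarrow> 'v \<Rightarrow> nat)"

definition full_pointed_coloring_quiver_torus :: "nat \<Rightarrow> int \<Rightarrow> int \<Rightarrow> (nat \<Rightarrow> int) dmg" where
  "full_pointed_coloring_quiver_torus p n y = (torus_colorings p n y, torus_arcs p n y)"

definition dmg_iso :: "'a dmg \<Rightarrow> 'b dmg \<Rightarrow> bool" where
  "dmg_iso G H \<longleftrightarrow> (\<exists>f. bij_betw f (fst G) (fst H) \<and>
     (\<forall>u\<in>fst G. \<forall>v\<in>fst G. snd G u v = snd H (f u) (f v)))"

definition complete_dmg :: "nat \<Rightarrow> nat \<Rightarrow> nat dmg" where
  "complete_dmg m k = ({1..m}, \<lambda>u v. k)"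

definition directed_join :: "'v dmg \<Rightarrow> nat \<Rightarrow> 'v dmg \<Rightarrow> 'v dmg" where
  "directed_join G k H = (fst G \<union> fst H, \<lambda>u v.
     if u \<in> fst G \<and> v \<in> fst G then snd G u v
     else if u \<in> fst H \<and> v \<in> fst H then snd H u v
     else if u \<in> fst G \<and> v \<in> fst H then k
     else 0)"

end

(* Every pointed endomorphism of (Z_n, y, y) is an affine map a \<mapsto> y + u (a - y), and every
   coloring of the (p,2)-torus linkoid is an arithmetic progression x_i = y + (i - 1) t with
   p t = 0 in Z_n: in both cases consecutive values satisfy x_k + x_(k+2) = 2 x_(k+1).
   Writing n = c d with c = gcd(p, n), the colorings are therefore indexed by the c multiples
   t of d in Z_n, the trivial coloring by t = 0, and the arcs from the coloring with parameter
   s to the one with parameter t by the solutions u in Z_n of s u = t (mod n).  For s = 0 these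
   are all of Z_n or none; for s = d k with c not dividing k the congruence becomes
   k u = t/d (mod c), which has exactly d solutions in Z_n because the prime c is coprime to k. *)

theory Submission
  imports Defs "HOL-Number_Theory.Cong"
begin

section \<open>Linear congruences\<close>

lemma card_cong_atLeastLessThan:
  fixes a b r :: int
  assumes a: "a > 0"
  shows "card {u \<in> {0..<a * b}. [u = r] (mod a)} = nat b"
proof -
  have "{u \<in> {0..<a * b}. [u = r] (mod a)} = (\<lambda>m. r mod a + a * m) ` {0..<b}"
  proof (intro equalityI subsetI)
    fix u assume u: "u \<in> {u \<in> {0..<a * b}. [u = r] (mod a)}"
    have "u div a * a \<le> u" using pos_mod_sign[OF a, of u] div_mult_mod_eq[of u a] by linarith
    then have "u div a * a < b * a" using u by (simp add: mult.commute)
    then have "u div a \<in> {0..<b}" using u a by (simp add: mult_less_cancel_right pos_imp_zdiv_nonneg_iff)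
    moreover have "u = r mod a + a * (u div a)"
      using u div_mult_mod_eq[of u a] by (simp add: cong_def algebra_simps)
    ultimately show "u \<in> (\<lambda>m. r mod a + a * m) ` {0..<b}" by blast
  next
    fix u assume "u \<in> (\<lambda>m. r mod a + a * m) ` {0..<b}"
    then obtain m where m: "0 \<le> m" "m < b" "u = r mod a + a * m" by auto
    have "a * (m + 1) \<le> a * b" using m a by (intro mult_left_mono) auto
    then show "u \<in> {u \<in> {0..<a * b}. [u = r] (mod a)}"
      using m a pos_mod_bound[OF a, of r] by (auto simp: cong_def algebra_simps simp del: pos_mod_bound)
  qed
  moreover have "inj_on (\<lambda>m. r mod a + a * m) {0..<b}" using a by (auto simp: inj_on_def)
  ultimately show ?thesis by (simp add: card_image)
qed

lemma card_linear_cong: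
  fixes c d k j :: int
  assumes c: "c > 0" and k: "coprime k c"
  shows "card {u \<in> {0..<c * d}. [k * u = j] (mod c)} = nat d"
proof -
  obtain w where w: "[k * w = 1] (mod c)" using cong_solve_coprime_int[OF k] by blast
  have "[k * (w * j) = j] (mod c)"
    using cong_scalar_right[OF w, of j] by (simp add: mult.assoc)
  then have "[k * u = j] (mod c) \<longleftrightarrow> [k * u = k * (w * j)] (mod c)" for u
    by (meson cong_sym cong_trans)
  also have "\<dots> u \<longleftrightarrow> [u = w * j] (mod c)" for u
    by (rule cong_mult_lcancel[OF k])
  finally have "{u \<in> {0..<c * d}. [k * u = j] (mod c)} = {u \<in> {0..<c * d}. [u = w * j] (mod c)}"
    by blast
  then show ?thesis using card_cong_atLeastLessThan[OF c] by simp
qed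

lemma dvd_mult_iff_div_gcd_dvd:
  fixes m n t :: int
  assumes "n \<noteq> 0"
  shows "n dvd m * t \<longleftrightarrow> n div gcd m n dvd t"
proof -
  define g where "g = gcd m n"
  have g: "g \<noteq> 0" using assms by (simp add: g_def)
  have cop: "coprime (m div g) (n div g)"
    unfolding g_def using assms by (intro div_gcd_coprime) auto
  have nm: "g * (n div g) = n" "g * (m div g) = m" by (simp_all add: g_def)
  have "n dvd m * t \<longleftrightarrow> g * (n div g) dvd g * (m div g) * t"
    by (simp only: nm)
  also have "\<dots> \<longleftrightarrow> n div g dvd m div g * t" using g by (simp add: mult.assoc)
  also have "\<dots> \<longleftrightarrow> n div g dvd t"
    using cop by (simp add: coprime_commute coprime_dvd_mult_right_iff)
  finally show ?thesis by (simp add: g_def)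
qed

lemma card_linear_cong_common_factor:
  fixes c d s t :: int
  assumes c: "prime c" and d: "d > 0" and s: "d dvd s" "\<not> c * d dvd s" and t: "d dvd t"
  shows "card {u \<in> {0..<c * d}. [s * u = t] (mod c * d)} = nat d"
proof -
  obtain k j where kj: "s = d * k" "t = d * j" using s(1) t by (elim dvdE)
  have "\<not> c dvd k" using s(2) kj(1) by (simp add: mult.commute)
  then have cop: "coprime k c" using prime_imp_coprime[OF c] coprime_commute by blast
  have "[s * u = t] (mod c * d) \<longleftrightarrow> [k * u = j] (mod c)" for u
  proof -
    have "s * u - t = d * (k * u - j)" by (simp add: kj algebra_simps)
    then show ?thesis using d by (simp add: cong_iff_dvd_diff mult.commute[of c d])
  qed
  then show ?thesis
    using card_linear_cong[OF prime_gt_0_int[OF c] cop] by simp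
qed

lemma arith_progression_cong:
  fixes x :: "nat \<Rightarrow> int"
  assumes rec: "\<And>k. k + 2 \<le> N \<Longrightarrow> [x k + x (k + 2) = 2 * x (k + 1)] (mod n)"
    and "k \<le> N"
  shows "[x k = x 0 + int k * (x 1 - x 0)] (mod n)"
  using \<open>k \<le> N\<close>
proof (induction k rule: less_induct)
  case (less k)
  consider "k = 0" | "k = 1" | m where "k = m + 2"
    by (metis One_nat_def add_2_eq_Suc' not0_implies_Suc)
  then show ?case
  proof cases
    case 3
    have IH: "[x m = x 0 + int m * (x 1 - x 0)] (mod n)"
      "[x (m + 1) = x 0 + int (m + 1) * (x 1 - x 0)] (mod n)"
      using less.IH[of m] less.IH[of "m + 1"] less.prems 3 by simp_all
    have "[x k = 2 * x (m + 1) - x m] (mod n)"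
      using rec[of m] less.prems 3 by (simp add: cong_iff_dvd_diff algebra_simps)
    also have "[2 * x (m + 1) - x m
        = 2 * (x 0 + int (m + 1) * (x 1 - x 0)) - (x 0 + int m * (x 1 - x 0))] (mod n)"
      using IH by (intro cong_diff cong_mult cong_refl)
    finally show ?thesis by (simp add: 3 algebra_simps)
  qed simp_all
qed

section \<open>Pointed endomorphisms of the dihedral quandle\<close>

lemma Zn_eq_if_cong: "a \<in> Zn n \<Longrightarrow> b \<in> Zn n \<Longrightarrow> [a = b] (mod n) \<Longrightarrow> a = b"
  by (simp add: Zn_def cong_def)

lemma mod_in_Zn: "n > 0 \<Longrightarrow> a mod n \<in> Zn n"
  by (simp add: Zn_def)

lemma dih_op_in_Zn: "n > 0 \<Longrightarrow> dih_op n a b \<in> Zn n"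
  by (simp add: dih_op_def mod_in_Zn)

lemma cong_dih_op: "[dih_op n a b = 2 * b - a] (mod n)"
  by (simp add: dih_op_def cong_def)

lemma dih_op_cong:
  assumes "[a = a'] (mod n)" "[b = b'] (mod n)"
  shows "dih_op n a b = dih_op n a' b'"
  using cong_diff[OF cong_mult[OF cong_refl[of 2] assms(2)] assms(1)]
  by (simp add: dih_op_def cong_def)

definition dih_affine :: "int \<Rightarrow> int \<Rightarrow> int \<Rightarrow> int \<Rightarrow> int" where
  "dih_affine n y u a = (if a \<in> Zn n then (y + (a - y) * u) mod n else 0)"

lemma dih_affine_in_Zn: "n > 0 \<Longrightarrow> dih_affine n y u a \<in> Zn n"
  by (simp add: dih_affine_def mod_in_Zn Zn_def)

lemma cong_dih_affine: "a \<in> Zn n \<Longrightarrow> [dih_affine n y u a = y + (a - y) * u] (mod n)"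
  by (simp add: dih_affine_def cong_def)

lemma dih_affine_mod: "dih_affine n y (u mod n) = dih_affine n y u"
  by (auto simp: dih_affine_def intro!: ext) (metis mod_add_right_eq mod_mult_right_eq)

lemma dih_affine_in_End:
  assumes "n > 0" "y \<in> Zn n"
  shows "dih_affine n y u \<in> dih_pointed_End n y"
proof -
  let ?f = "dih_affine n y u"
  have "?f (dih_op n a b) = dih_op n (?f a) (?f b)" if "a \<in> Zn n" "b \<in> Zn n" for a b
  proof (rule Zn_eq_if_cong)
    have "[?f (dih_op n a b) = y + (dih_op n a b - y) * u] (mod n)"
      using dih_op_in_Zn[OF assms(1)] by (rule cong_dih_affine)
    also have "[y + (dih_op n a b - y) * u = y + (2 * b - a - y) * u] (mod n)"
      by (intro cong_add cong_mult cong_diff cong_refl cong_dih_op)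
    also have "y + (2 * b - a - y) * u = 2 * (y + (b - y) * u) - (y + (a - y) * u)"
      by (simp add: algebra_simps)
    also have "[\<dots> = 2 * ?f b - ?f a] (mod n)"
      using that by (intro cong_diff cong_mult cong_refl cong_sym[OF cong_dih_affine])
    also have "[2 * ?f b - ?f a = dih_op n (?f a) (?f b)] (mod n)"
      by (rule cong_sym[OF cong_dih_op])
    finally show "[?f (dih_op n a b) = dih_op n (?f a) (?f b)] (mod n)" .
  qed (simp_all add: assms dih_affine_in_Zn dih_op_in_Zn)
  moreover have "?f y = y" using assms by (simp add: dih_affine_def Zn_def)
  ultimately show ?thesis
    using assms by (simp add: dih_pointed_End_def dih_affine_in_Zn) (simp add: dih_affine_def)
qed

lemma dih_pointed_End_affine:
  assumes n: "n > 0" and y: "y \<in> Zn n" and f: "f \<in> dih_pointed_End n y"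
  shows "f = dih_affine n y (f ((y + 1) mod n) - y)"
proof
  fix a
  define g where "g k = f ((y + int k) mod n)" for k
  have f_Zn: "\<And>a. a \<in> Zn n \<Longrightarrow> f a \<in> Zn n"
    and f_hom: "\<And>a b. a \<in> Zn n \<Longrightarrow> b \<in> Zn n \<Longrightarrow> f (dih_op n a b) = dih_op n (f a) (f b)"
    and f_out: "\<And>a. a \<notin> Zn n \<Longrightarrow> f a = 0" and f_y: "f y = y"
    using f by (auto simp: dih_pointed_End_def)
  have g_rec: "[g k + g (k + 2) = 2 * g (k + 1)] (mod n)" for k
  proof -
    \<comment> \<open>y + k + 2 = (y + k) \<triangleright> (y + k + 1), so g obeys the recurrence of a coloring\<close>
    have "dih_op n ((y + int k) mod n) ((y + int (k + 1)) mod n) = dih_op n (y + int k) (y + int (k + 1))"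
      by (intro dih_op_cong) (simp_all add: cong_def)
    also have "\<dots> = (y + int (k + 2)) mod n"
      by (simp add: dih_op_def algebra_simps)
    finally have "(y + int (k + 2)) mod n = dih_op n ((y + int k) mod n) ((y + int (k + 1)) mod n)" ..
    then have "g (k + 2) = dih_op n (g k) (g (k + 1))"
      unfolding g_def using f_hom mod_in_Zn[OF n] by presburger
    then show ?thesis
      using cong_dih_op[of n "g k" "g (k + 1)"] by (simp add: cong_iff_dvd_diff algebra_simps)
  qed
  have g01: "g 0 = y" "g 1 = f ((y + 1) mod n)"
    using y f_y by (simp_all add: g_def Zn_def)
  let ?u = "f ((y + 1) mod n) - y"
  show "f a = dih_affine n y ?u a"
  proof (cases "a \<in> Zn n")
    case True
    define k where "k = nat ((a - y) mod n)"
    have k: "int k = (a - y) mod n" using n by (simp add: k_def)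
    have "f a = g k"
      using True by (simp add: g_def k mod_simps Zn_def)
    also have "[g k = y + int k * ?u] (mod n)"
      using arith_progression_cong[of k g n k] g_rec g01 by simp
    also have "[y + int k * ?u = y + (a - y) * ?u] (mod n)"
      unfolding k by (intro cong_add cong_mult cong_refl) (simp add: cong_def)
    also have "[y + (a - y) * ?u = dih_affine n y ?u a] (mod n)"
      using True by (rule cong_sym[OF cong_dih_affine])
    finally show ?thesis
      by (rule Zn_eq_if_cong[OF f_Zn[OF True] dih_affine_in_Zn[OF n]])
  qed (simp add: f_out dih_affine_def)
qed

lemma dih_pointed_End_eq:
  assumes "n > 0" "y \<in> Zn n"
  shows "dih_pointed_End n y = dih_affine n y ` {0..<n}"
proof
  show "dih_pointed_End n y \<subseteq> dih_affine n y ` {0..<n}"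
  proof
    fix f assume "f \<in> dih_pointed_End n y"
    then have "f = dih_affine n y ((f ((y + 1) mod n) - y) mod n)"
      using dih_pointed_End_affine[OF assms] by (simp add: dih_affine_mod)
    moreover have "(f ((y + 1) mod n) - y) mod n \<in> {0..<n}" using assms by simp
    ultimately show "f \<in> dih_affine n y ` {0..<n}" by blast
  qed
qed (use dih_affine_in_End[OF assms] in blast)

lemma inj_on_dih_affine:
  assumes "n > 0" "y \<in> Zn n"
  shows "inj_on (dih_affine n y) {0..<n}"
proof
  fix u v assume uv: "u \<in> {0..<n}" "v \<in> {0..<n}" "dih_affine n y u = dih_affine n y v"
  have "[dih_affine n y u ((y + 1) mod n) = y + u] (mod n)" for u
  proof -
    have "[dih_affine n y u ((y + 1) mod n) = y + ((y + 1) mod n - y) * u] (mod n)"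
      by (rule cong_dih_affine[OF mod_in_Zn[OF assms(1)]])
    also have "[y + ((y + 1) mod n - y) * u = y + ((y + 1) - y) * u] (mod n)"
      by (intro cong_add cong_mult cong_diff cong_refl) (simp add: cong_def)
    finally show ?thesis by simp
  qed
  then have "[y + u = y + v] (mod n)" using uv(3) by (metis cong_sym cong_trans)
  then have "[u = v] (mod n)" by (simp add: cong_add_lcancel)
  then show "u = v" using uv(1,2) by (simp add: cong_def)
qed

section \<open>Colorings of the torus linkoid\<close>

definition torus_coloring :: "nat \<Rightarrow> int \<Rightarrow> int \<Rightarrow> int \<Rightarrow> nat \<Rightarrow> int" where
  "torus_coloring p n y t = (\<lambda>i. if i \<in> {1..p+1} then (y + int (i - 1) * t) mod n else 0)"

lemma torus_coloring_in_Zn: "n > 0 \<Longrightarrow> torus_coloring p n y t i \<in> Zn n"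
  by (simp add: torus_coloring_def mod_in_Zn) (simp add: Zn_def)

lemma torus_coloring_outside: "i \<notin> {1..p+1} \<Longrightarrow> torus_coloring p n y t i = 0"
  unfolding torus_coloring_def by auto

lemma cong_torus_coloring:
  "i \<in> {1..p+1} \<Longrightarrow> [torus_coloring p n y t i = y + (int i - 1) * t] (mod n)"
  by (simp add: torus_coloring_def cong_def of_nat_diff)

lemma torus_coloring_eq_iff:
  assumes "p > 0"
  shows "torus_coloring p n y s = torus_coloring p n y t \<longleftrightarrow> [s = t] (mod n)"
proof
  assume eq: "torus_coloring p n y s = torus_coloring p n y t"
  have two: "2 \<in> {1..p+1}" using assms by auto
  have "[y + s = y + t] (mod n)"
    using cong_torus_coloring[OF two, of n y s] cong_torus_coloring[OF two, of n y t] eq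
    by (simp add: cong_def)
  then show "[s = t] (mod n)" by (simp add: cong_add_lcancel)
next
  assume "[s = t] (mod n)"
  then have "[y + int (i - 1) * s = y + int (i - 1) * t] (mod n)" for i
    by (intro cong_add cong_mult cong_refl)
  then show "torus_coloring p n y s = torus_coloring p n y t"
    unfolding torus_coloring_def cong_def by presburger
qed

lemma inj_on_torus_coloring:
  assumes "p > 0"
  shows "inj_on (torus_coloring p n y) {0..<n}"
  using torus_coloring_eq_iff[OF assms] by (auto simp: inj_on_def cong_def)

lemma torus_coloring_zero:
  "y \<in> Zn n \<Longrightarrow> torus_coloring p n y 0 = (\<lambda>i. if i \<in> {1..p+1} then y else 0)"
  by (rule ext) (simp add: torus_coloring_def Zn_def)

lemma torus_coloring_in_torus_colorings:
  assumes p: "p > 0" and n: "n > 0" and y: "y \<in> Zn n" and t: "n dvd int p * t"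
  shows "torus_coloring p n y t \<in> torus_colorings p n y"
proof -
  let ?x = "torus_coloring p n y t"
  have x_cong: "[?x i = y + (int i - 1) * t] (mod n)" if "1 \<le> i" "i \<le> p + 1" for i
    using that by (intro cong_torus_coloring) simp
  have pt: "[int p * t = 0] (mod n)" using t by (simp add: cong_0_iff)
  have "?x i = dih_op n (?x (i + 2)) (?x (i + 1))" if "i \<in> {1..p-1}" for i
  proof (rule Zn_eq_if_cong)
    have "[?x i = y + (int i - 1) * t] (mod n)" using that by (intro x_cong) auto
    also have "y + (int i - 1) * t = 2 * (y + (int (i + 1) - 1) * t) - (y + (int (i + 2) - 1) * t)"
      by (simp add: algebra_simps)
    also have "[\<dots> = 2 * ?x (i + 1) - ?x (i + 2)] (mod n)"
      using that by (intro cong_diff cong_mult cong_refl cong_sym[OF x_cong]) auto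
    also have "[2 * ?x (i + 1) - ?x (i + 2) = dih_op n (?x (i + 2)) (?x (i + 1))] (mod n)"
      by (rule cong_sym[OF cong_dih_op])
    finally show "[?x i = dih_op n (?x (i + 2)) (?x (i + 1))] (mod n)" .
  qed (use that n in \<open>simp_all add: torus_coloring_in_Zn dih_op_in_Zn\<close>)
  moreover have "?x p = dih_op n (?x 2) (?x (p + 1))"
  proof (rule Zn_eq_if_cong)
    have "[?x p = y + (int p - 1) * t + 0] (mod n)" using p by (simp add: x_cong)
    also have "[y + (int p - 1) * t + 0 = y + (int p - 1) * t + int p * t] (mod n)"
      by (intro cong_add cong_refl cong_sym[OF pt])
    also have "y + (int p - 1) * t + int p * t = 2 * (y + (int (p + 1) - 1) * t) - (y + (int 2 - 1) * t)"
      by (simp add: algebra_simps)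
    also have "[\<dots> = 2 * ?x (p + 1) - ?x 2] (mod n)"
      using p by (intro cong_diff cong_mult cong_refl cong_sym[OF x_cong]) auto
    also have "[2 * ?x (p + 1) - ?x 2 = dih_op n (?x 2) (?x (p + 1))] (mod n)"
      by (rule cong_sym[OF cong_dih_op])
    finally show "[?x p = dih_op n (?x 2) (?x (p + 1))] (mod n)" .
  qed (use p n in \<open>simp_all add: torus_coloring_in_Zn dih_op_in_Zn\<close>)
  moreover have "?x (p + 1) = y"
  proof (rule Zn_eq_if_cong)
    have "[?x (p + 1) = y + int p * t] (mod n)" using x_cong[of "p + 1"] by simp
    also have "[y + int p * t = y + 0] (mod n)" by (intro cong_add cong_refl pt)
    finally show "[?x (p + 1) = y] (mod n)" by simp
  qed (simp_all add: n y torus_coloring_in_Zn)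
  moreover have "?x 1 = y" using y by (simp add: torus_coloring_def Zn_def)
  ultimately show ?thesis
    using n by (simp add: torus_colorings_def torus_coloring_in_Zn) (simp add: torus_coloring_def)
qed

lemma torus_colorings_progressionD:
  assumes n: "n > 0" and x: "x \<in> torus_colorings p n y"
  shows "x = torus_coloring p n y (x 2 - y)" and "n dvd int p * (x 2 - y)"
proof -
  have x_Zn: "\<And>i. i \<in> {1..p+1} \<Longrightarrow> x i \<in> Zn n"
    and x_out: "\<And>i. i \<notin> {1..p+1} \<Longrightarrow> x i = 0"
    and x_rel: "\<And>i. i \<in> {1..p-1} \<Longrightarrow> x i = dih_op n (x (i + 2)) (x (i + 1))"
    and x_1: "x 1 = y" and x_p1: "x (p + 1) = y"
    using x by (auto simp: torus_colorings_def)
  have "[x (k + 1) + x (k + 3) = 2 * x (k + 2)] (mod n)" if "k + 2 \<le> p" for k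
    using x_rel[of "k + 1"] that cong_dih_op[of n "x (k + 3)" "x (k + 2)"]
    by (simp add: numeral_3_eq_3 cong_iff_dvd_diff algebra_simps)
  then have progression: "[x (k + 1) = y + int k * (x 2 - y)] (mod n)" if "k \<le> p" for k
    using arith_progression_cong[of p "\<lambda>k. x (k + 1)" n k] that x_1
    by (simp add: numeral_3_eq_3 numeral_2_eq_2 add.commute)
  show "x = torus_coloring p n y (x 2 - y)"
  proof
    fix i
    show "x i = torus_coloring p n y (x 2 - y) i"
    proof (cases "i \<in> {1..p+1}")
      case True
      have "[x i = y + (int i - 1) * (x 2 - y)] (mod n)"
        using True progression[of "i - 1"] by auto
      also have "[y + (int i - 1) * (x 2 - y) = torus_coloring p n y (x 2 - y) i] (mod n)"
        by (rule cong_sym[OF cong_torus_coloring[OF True]])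
      finally show ?thesis
        by (rule Zn_eq_if_cong[OF x_Zn[OF True] torus_coloring_in_Zn[OF n]])
    qed (simp add: x_out torus_coloring_def del: atLeastAtMost_iff)
  qed
  have "[y = y + int p * (x 2 - y)] (mod n)"
    using progression[of p] x_p1 by simp
  then show "n dvd int p * (x 2 - y)"
    by (simp add: cong_iff_dvd_diff)
qed

lemma torus_colorings_eq_image:
  assumes "p > 0" "n > 0" "y \<in> Zn n"
  shows "torus_colorings p n y = torus_coloring p n y ` {t \<in> {0..<n}. n dvd int p * t}"
proof
  show "torus_colorings p n y \<subseteq> torus_coloring p n y ` {t \<in> {0..<n}. n dvd int p * t}"
  proof
    fix x assume x: "x \<in> torus_colorings p n y"
    let ?t = "(x 2 - y) mod n"
    have "torus_coloring p n y (x 2 - y) = torus_coloring p n y ?t"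
      by (simp add: torus_coloring_eq_iff[OF assms(1)] cong_def)
    then have "x = torus_coloring p n y ?t"
      using torus_colorings_progressionD(1)[OF assms(2) x] by simp
    moreover have "n dvd int p * ?t"
    proof -
      have "[int p * ?t = int p * (x 2 - y)] (mod n)"
        by (intro cong_scalar_left) (simp add: cong_def)
      also have "[int p * (x 2 - y) = 0] (mod n)"
        using torus_colorings_progressionD(2)[OF assms(2) x] by (simp add: cong_0_iff)
      finally show ?thesis by (simp add: cong_0_iff)
    qed
    ultimately show "x \<in> torus_coloring p n y ` {t \<in> {0..<n}. n dvd int p * t}"
      using assms(2) by auto
  qed
qed (use torus_coloring_in_torus_colorings[OF assms] in auto)

lemma card_torus_colorings:
  assumes p: "p > 0" and n: "n > 0" and y: "y \<in> Zn n"
  shows "card (torus_colorings p n y) = nat (gcd (int p) n)"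
proof -
  define c d where "c = gcd (int p) n" and "d = n div c"
  have nd: "n = d * c" and d: "d > 0"
    using n by (simp_all add: c_def d_def pos_imp_zdiv_pos_iff zdvd_imp_le)
  have "n dvd int p * t \<longleftrightarrow> [t = 0] (mod d)" for t
    using dvd_mult_iff_div_gcd_dvd[of n "int p" t] n by (simp add: cong_0_iff c_def d_def)
  then have S: "{t \<in> {0..<n}. n dvd int p * t} = {t \<in> {0..<d * c}. [t = 0] (mod d)}"
    by (simp only: nd)
  have "card (torus_colorings p n y) = card {t \<in> {0..<n}. n dvd int p * t}"
    unfolding torus_colorings_eq_image[OF p n y]
    by (rule card_image, rule inj_on_subset[OF inj_on_torus_coloring[OF p]]) auto
  also have "\<dots> = nat c"
    unfolding S by (rule card_cong_atLeastLessThan[OF d])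
  finally show ?thesis by (simp add: c_def)
qed

section \<open>Directed joins of complete multigraphs\<close>

lemma dmg_iso_complete_dmgD:
  assumes "dmg_iso G (complete_dmg m k)"
  shows "finite (fst G)" "card (fst G) = m" "\<And>u v. u \<in> fst G \<Longrightarrow> v \<in> fst G \<Longrightarrow> snd G u v = k"
proof -
  obtain f where f: "bij_betw f (fst G) {1..m}"
    and w: "\<forall>u\<in>fst G. \<forall>v\<in>fst G. snd G u v = k"
    using assms by (auto simp: dmg_iso_def complete_dmg_def)
  show "finite (fst G)" using bij_betw_finite[OF f] by simp
  show "card (fst G) = m" using bij_betw_same_card[OF f] by simp
  show "\<And>u v. u \<in> fst G \<Longrightarrow> v \<in> fst G \<Longrightarrow> snd G u v = k" using w by blast
qed

lemma dmg_iso_directed_join_complete: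
  assumes V: "finite V" "card V = Suc m" "v\<^sub>0 \<in> V"
    and w_loop: "w v\<^sub>0 v\<^sub>0 = l"
    and w_from_v0: "\<And>v. v \<in> V \<Longrightarrow> v \<noteq> v\<^sub>0 \<Longrightarrow> w v\<^sub>0 v = 0"
    and w_other: "\<And>u v. u \<in> V \<Longrightarrow> v \<in> V \<Longrightarrow> u \<noteq> v\<^sub>0 \<Longrightarrow> w u v = k"
    and G: "dmg_iso G (complete_dmg m k)" and H: "dmg_iso H (complete_dmg 1 l)"
    and disj: "fst G \<inter> fst H = {}"
  shows "dmg_iso (V, w) (directed_join G k H)"
proof -
  obtain h\<^sub>0 where h0: "fst H = {h\<^sub>0}"
    using dmg_iso_complete_dmgD(2)[OF H] by (rule card_1_singletonE)
  have "card (V - {v\<^sub>0}) = card (fst G)"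
    using V dmg_iso_complete_dmgD(2)[OF G] by simp
  then obtain \<psi> where \<psi>: "bij_betw \<psi> (V - {v\<^sub>0}) (fst G)"
    using finite_same_card_bij V(1) dmg_iso_complete_dmgD(1)[OF G] by blast
  define \<phi> where "\<phi> = \<psi>(v\<^sub>0 := h\<^sub>0)"
  have "bij_betw \<phi> (V - {v\<^sub>0}) (fst G)"
    using \<psi> by (rule bij_betw_cong[THEN iffD1, rotated]) (simp add: \<phi>_def)
  moreover have "bij_betw \<phi> {v\<^sub>0} {h\<^sub>0}" by (simp add: \<phi>_def bij_betw_def)
  ultimately have "bij_betw \<phi> (V - {v\<^sub>0} \<union> {v\<^sub>0}) (fst G \<union> {h\<^sub>0})"
    using disj h0 by (intro bij_betw_combine) auto
  then have bij: "bij_betw \<phi> V (fst G \<union> fst H)"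
    using V(3) h0 by (simp add: insert_absorb)
  have \<phi>_G: "\<phi> v \<in> fst G" if "v \<in> V" "v \<noteq> v\<^sub>0" for v
    using \<psi> that by (auto simp: \<phi>_def bij_betw_def)
  have "w u v = snd (directed_join G k H) (\<phi> u) (\<phi> v)" if "u \<in> V" "v \<in> V" for u v
    using that \<phi>_G[of u] \<phi>_G[of v] disj h0 w_loop w_from_v0 w_other
      dmg_iso_complete_dmgD(3)[OF G] dmg_iso_complete_dmgD(3)[OF H]
    by (cases "u = v\<^sub>0"; cases "v = v\<^sub>0") (auto simp: directed_join_def \<phi>_def)
  with bij show ?thesis
    by (auto simp: dmg_iso_def directed_join_def)
qed

section \<open>The coloring quiver\<close>

lemma dih_affine_torus_coloring:
  assumes n: "n > 0" and i: "i \<in> {1..p+1}"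
  shows "dih_affine n y u (torus_coloring p n y s i) = torus_coloring p n y (s * u) i"
proof (rule Zn_eq_if_cong[OF dih_affine_in_Zn[OF n] torus_coloring_in_Zn[OF n]])
  have "[dih_affine n y u (torus_coloring p n y s i) = y + (torus_coloring p n y s i - y) * u] (mod n)"
    by (rule cong_dih_affine[OF torus_coloring_in_Zn[OF n]])
  also have "[y + (torus_coloring p n y s i - y) * u = y + (y + (int i - 1) * s - y) * u] (mod n)"
    by (intro cong_add cong_mult cong_diff cong_refl cong_torus_coloring i)
  also have "y + (y + (int i - 1) * s - y) * u = y + (int i - 1) * (s * u)"
    by (simp add: algebra_simps)
  also have "[\<dots> = torus_coloring p n y (s * u) i] (mod n)"
    by (rule cong_sym[OF cong_torus_coloring[OF i]])
  finally show "[dih_affine n y u (torus_coloring p n y s i) = torus_coloring p n y (s * u) i] (mod n)" .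
qed

lemma torus_arcs_torus_coloring:
  assumes p: "p > 0" and n: "n > 0" and y: "y \<in> Zn n"
  shows "torus_arcs p n y (torus_coloring p n y s) (torus_coloring p n y t)
       = card {u \<in> {0..<n}. [s * u = t] (mod n)}"
proof -
  let ?U = "{u \<in> {0..<n}. [s * u = t] (mod n)}"
  have "(\<forall>i\<in>{1..p+1}. dih_affine n y u (torus_coloring p n y s i) = torus_coloring p n y t i)
      \<longleftrightarrow> [s * u = t] (mod n)" for u
  proof -
    have "(\<forall>i\<in>{1..p+1}. dih_affine n y u (torus_coloring p n y s i) = torus_coloring p n y t i)
        \<longleftrightarrow> (\<forall>i\<in>{1..p+1}. torus_coloring p n y (s * u) i = torus_coloring p n y t i)"
      using dih_affine_torus_coloring[OF n] by simp
    also have "\<dots> \<longleftrightarrow> torus_coloring p n y (s * u) = torus_coloring p n y t"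
      unfolding fun_eq_iff by (metis torus_coloring_outside)
    also have "\<dots> \<longleftrightarrow> [s * u = t] (mod n)"
      by (rule torus_coloring_eq_iff[OF p])
    finally show ?thesis .
  qed
  then have "{f \<in> dih_pointed_End n y. \<forall>i\<in>{1..p+1}. f (torus_coloring p n y s i) = torus_coloring p n y t i}
      = dih_affine n y ` ?U"
    unfolding dih_pointed_End_eq[OF n y] by blast
  moreover have "inj_on (dih_affine n y) ?U"
    by (rule inj_on_subset[OF inj_on_dih_affine[OF n y]]) auto
  ultimately show ?thesis
    by (simp add: torus_arcs_def card_image)
qed

lemma torus_arcs_from_trivial:
  assumes p: "p > 0" and n: "n > 0" and y: "y \<in> Zn n" and \<beta>: "\<beta> \<in> torus_colorings p n y"
  shows "torus_arcs p n y (torus_coloring p n y 0) \<beta> = (if \<beta> = torus_coloring p n y 0 then nat n else 0)"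
proof -
  obtain t where t: "t \<in> {0..<n}" and \<beta>_eq: "\<beta> = torus_coloring p n y t"
    using \<beta> torus_colorings_eq_image[OF p n y] by auto
  have "\<beta> = torus_coloring p n y 0 \<longleftrightarrow> t = 0"
    using t inj_on_torus_coloring[OF p] n by (auto simp: \<beta>_eq inj_on_def)
  moreover have "{u \<in> {0..<n}. [0 * u = t] (mod n)} = (if t = 0 then {0..<n} else {})"
    using t by (auto simp: cong_def)
  ultimately show ?thesis
    by (simp add: \<beta>_eq torus_arcs_torus_coloring[OF p n y])
qed

lemma torus_arcs_from_nontrivial:
  assumes p: "p > 0" and n: "n > 0" and y: "y \<in> Zn n" and c: "prime (gcd (int p) n)"
    and \<alpha>: "\<alpha> \<in> torus_colorings p n y" "\<alpha> \<noteq> torus_coloring p n y 0"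
    and \<beta>: "\<beta> \<in> torus_colorings p n y"
  shows "torus_arcs p n y \<alpha> \<beta> = nat (n div gcd (int p) n)"
proof -
  define d where "d = n div gcd (int p) n"
  have nd: "n = gcd (int p) n * d" and d: "d > 0"
    using n by (simp_all add: d_def pos_imp_zdiv_pos_iff zdvd_imp_le)
  have div_iff: "n dvd int p * t \<longleftrightarrow> d dvd t" for t
    using dvd_mult_iff_div_gcd_dvd[of n "int p" t] n by (simp add: d_def)
  obtain s t where s: "s \<in> {0..<n}" "d dvd s" and \<alpha>_eq: "\<alpha> = torus_coloring p n y s"
    and t: "d dvd t" and \<beta>_eq: "\<beta> = torus_coloring p n y t"
    using \<alpha>(1) \<beta> torus_colorings_eq_image[OF p n y] div_iff by auto
  have "s \<noteq> 0" using \<alpha>(2) \<alpha>_eq by auto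
  then have "\<not> n dvd s" using s(1) by (auto dest: zdvd_imp_le)
  then have "card {u \<in> {0..<n}. [s * u = t] (mod n)} = nat d"
    using card_linear_cong_common_factor[OF c d s(2) _ t] nd by simp
  then show ?thesis
    by (simp add: \<alpha>_eq \<beta>_eq torus_arcs_torus_coloring[OF p n y] d_def)
qed

theorem theorem6p15:
  fixes p :: nat and n :: int and y :: int
    and G H :: "'v dmg"
  assumes "p > 0" and "n > 0"
    and "prime (gcd (int p) n)"
    and "y \<in> Zn n"
    and "dmg_iso G (complete_dmg (nat (gcd (int p) n) - 1) (nat (n div gcd (int p) n)))"
    and "dmg_iso H (complete_dmg 1 (nat n))"
    and "fst G \<inter> fst H = {}"
  shows "dmg_iso (full_pointed_coloring_quiver_torus p n y)
           (directed_join G (nat (n div gcd (int p) n)) H)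
       \<and> torus_arcs p n y (\<lambda>i. if i \<in> {1..p+1} then y else 0)
                            (\<lambda>i. if i \<in> {1..p+1} then y else 0) = nat n
       \<and> (\<forall>\<beta>\<in>torus_colorings p n y. \<beta> \<noteq> (\<lambda>i. if i \<in> {1..p+1} then y else 0) \<longrightarrow>
             torus_arcs p n y (\<lambda>i. if i \<in> {1..p+1} then y else 0) \<beta> = 0)
       \<and> (\<forall>\<alpha>\<in>torus_colorings p n y. \<forall>\<beta>\<in>torus_colorings p n y.
             \<alpha> \<noteq> (\<lambda>i. if i \<in> {1..p+1} then y else 0) \<longrightarrow>
             torus_arcs p n y \<alpha> \<beta> = nat (n div gcd (int p) n))"
proof -
  note pny = assms(1,2,4)
  have trivial: "(\<lambda>i. if i \<in> {1..p+1} then y else 0) = torus_coloring p n y 0"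
    using torus_coloring_zero[OF assms(4)] by simp
  have trivial_in: "torus_coloring p n y 0 \<in> torus_colorings p n y"
    using torus_coloring_in_torus_colorings[OF pny] by simp
  have card: "card (torus_colorings p n y) = Suc (nat (gcd (int p) n) - 1)"
    using card_torus_colorings[OF pny] prime_gt_1_int[OF assms(3)] by simp
  have "dmg_iso (torus_colorings p n y, torus_arcs p n y)
      (directed_join G (nat (n div gcd (int p) n)) H)"
    using card trivial_in torus_arcs_from_trivial[OF pny] torus_arcs_from_nontrivial[OF pny assms(3)]
    by (intro dmg_iso_directed_join_complete[OF _ _ _ _ _ _ assms(5-7)])
      (auto intro: card_ge_0_finite)
  then show ?thesis
    unfolding trivial full_pointed_coloring_quiver_torus_def
    using trivial_in torus_arcs_from_trivial[OF pny] torus_arcs_from_nontrivial[OF pny assms(3)]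
    by simp
qed

end
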